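(* Let $A$ be a bounded distributive lattice, $X$ its Priestley space, and $\kappa$ a regular cardinal. (1) $A$ is a complete lattice that is a $\kappa$-frame if and only if $X$ is extremally order disconnected and ${\sf cl}(U)$ is a clopen upset for each $\kappa$-clopen upset $U$. (2) $A$ is a $\kappa$-complete Heyting lattice if and only if $X$ is an Esakia space and ${\sf cl}(U)$ is a clopen upset for each $\kappa$-clopen upset $U$. (3) Every relative annihilator of $A$ belongs to $\mathcal{BL}_\kappa A$ if and only if $X\setminus{\downarrow}U\in{\sf BL}_\kappa(X)$ for each clopen $U\subseteq X$. (4) Every relative annihilator of $A$ is a normal ideal belonging to $\mathcal{BL}_\kappa A$ if and only if $X\setminus{\downarrow}U\in{\sf DM}(X)\cap{\sf BL}_\kappa(X)$ for each clopen $U\subseteq X$.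
   Context: A $\kappa$-frame is a lattice in which all joins of fewer than $\kappa$ elements exist and are distributive ($a\wedge\bigvee S=\bigvee\{a\wedge s\}$); $\kappa$-complete means such joins exist; a Heyting lattice has $\to$ with $a\wedge b\le c\iff a\le b\to c$. A relative annihilator is $\langle a,b\rangle=\{x:a\wedge x\le b\}$; a normal ideal is a downset $N=N^{u\ell}$. $\mathcal{BL} A$ is the frame of D-ideals (downsets containing $\bigvee S$ for each subset $S$ with distributive join), with $A$ identified with its principal downsets, and $\mathcal{BL}_\kappa A$ is the sub-$\kappa$-frame of $\mathcal{BL} A$ generated by $A$. The Priestley space $X$ of $A$ is the set of prime filters ordered by inclusion, with topology generated by $\{\mathfrak s(a)\setminus\mathfrak s(b)\}$, $\mathfrak s(a)=\{x:a\in x\}$. ${\sf cl}$ is topological closure, ${\sf cl_2}(S)={\uparrow}{\sf cl}(S)$, ${\sf int_1}(S)=X\setminus{\downarrow}(X\setminus{\sf int}(S))$. A DM-set is an open upset $U$ with ${\sf int_1\,cl_2}(U)=U$; ${\sf DM}(X)$ is the set of DM-sets. A $\kappa$-clopen upset is a union of fewer than $\kappa$ clopen upsets; ${\sf BL}_\kappa(X)=\{{\sf int_1\,cl}(V): V\text{ a }\kappa\text{-clopen upset}\}$. $X$ is extremally order disconnected if ${\sf cl_2}(U)$ is clopen for every open upset $U$; $X$ is an Esakia space if ${\downarrow}U$ is clopen for every clopen $U\subseteq X$. *)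

theory Defs
  imports "HOL-Analysis.Analysis"
begin

unbundle cardinal_syntax

definition is_join :: "'a::order set \<Rightarrow> 'a \<Rightarrow> bool" where
  "is_join S j \<longleftrightarrow> (\<forall>s\<in>S. s \<le> j) \<and> (\<forall>u. (\<forall>s\<in>S. s \<le> u) \<longrightarrow> j \<le> u)"

definition complete_lat :: "'a::lattice itself \<Rightarrow> bool" where
  "complete_lat _ \<longleftrightarrow> (\<forall>S::'a set. \<exists>j. is_join S j)"

definition kappa_complete :: "'k rel \<Rightarrow> 'a::lattice itself \<Rightarrow> bool" where
  "kappa_complete \<kappa> _ \<longleftrightarrow> (\<forall>S::'a set. |S| <o \<kappa> \<longrightarrow> (\<exists>j. is_join S j))"

definition distributive_join :: "'a::lattice set \<Rightarrow> 'a \<Rightarrow> bool" where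
  "distributive_join S j \<longleftrightarrow> is_join S j \<and> (\<forall>a. is_join ((\<lambda>s. inf a s) ` S) (inf a j))"

definition kappa_frame :: "'k rel \<Rightarrow> 'a::lattice itself \<Rightarrow> bool" where
  "kappa_frame \<kappa> _ \<longleftrightarrow> (\<forall>S::'a set. |S| <o \<kappa> \<longrightarrow> (\<exists>j. distributive_join S j))"

definition heyting :: "'a::lattice itself \<Rightarrow> bool" where
  "heyting _ \<longleftrightarrow> (\<forall>b c::'a. \<exists>i. \<forall>a. inf a b \<le> c \<longleftrightarrow> a \<le> i)"

definition rel_ann :: "'a::lattice \<Rightarrow> 'a \<Rightarrow> 'a set" where
  "rel_ann a b = {x. inf a x \<le> b}"

definition is_downset :: "'a::order set \<Rightarrow> bool" where
  "is_downset D \<longleftrightarrow> (\<forall>x\<in>D. \<forall>y. y \<le> x \<longrightarrow> y \<in> D)"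

definition upper_bounds :: "'a::order set \<Rightarrow> 'a set" where
  "upper_bounds S = {u. \<forall>s\<in>S. s \<le> u}"

definition lower_bounds :: "'a::order set \<Rightarrow> 'a set" where
  "lower_bounds S = {l. \<forall>s\<in>S. l \<le> s}"

definition normal_ideal :: "'a::order set \<Rightarrow> bool" where
  "normal_ideal N \<longleftrightarrow> is_downset N \<and> N = lower_bounds (upper_bounds N)"

definition D_ideal :: "'a::lattice set \<Rightarrow> bool" where
  "D_ideal D \<longleftrightarrow> is_downset D \<and> (\<forall>S j. S \<subseteq> D \<longrightarrow> distributive_join S j \<longrightarrow> j \<in> D)"

text \<open>join in the frame BL A of D-ideals: the D-ideal generated by the union\<close>
definition D_gen :: "'a::lattice set \<Rightarrow> 'a set" where
  "D_gen S = \<Inter>{D. D_ideal D \<and> S \<subseteq> D}"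

inductive_set BLk :: "'k rel \<Rightarrow> 'a::lattice set set" for \<kappa> :: "'k rel" where
  princ: "{..a} \<in> BLk \<kappa>"
| meet: "I \<in> BLk \<kappa> \<Longrightarrow> J \<in> BLk \<kappa> \<Longrightarrow> I \<inter> J \<in> BLk \<kappa>"
| join: "(\<forall>I\<in>F. I \<in> BLk \<kappa>) \<Longrightarrow> |F| <o \<kappa> \<Longrightarrow> D_gen (\<Union>F) \<in> BLk \<kappa>"

definition prime_filter :: "'a::bounded_lattice set \<Rightarrow> bool" where
  "prime_filter F \<longleftrightarrow> top \<in> F \<and> bot \<notin> F
     \<and> (\<forall>x\<in>F. \<forall>y. x \<le> y \<longrightarrow> y \<in> F)
     \<and> (\<forall>x\<in>F. \<forall>y\<in>F. inf x y \<in> F)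
     \<and> (\<forall>x y. sup x y \<in> F \<longrightarrow> x \<in> F \<or> y \<in> F)"

definition PX :: "'a::bounded_lattice set set" where
  "PX = {F. prime_filter F}"

definition sX :: "'a::bounded_lattice \<Rightarrow> 'a set set" where
  "sX a = {x \<in> PX. a \<in> x}"

definition priestley_top :: "'a::bounded_lattice set topology" where
  "priestley_top = topology_generated_by {sX a - sX b | a b. True}"

text \<open>order on X is inclusion\<close>
definition upX :: "'a::bounded_lattice set set \<Rightarrow> 'a set set" where
  "upX S = {y \<in> PX. \<exists>x\<in>S. x \<subseteq> y}"

definition downX :: "'a::bounded_lattice set set \<Rightarrow> 'a set set" where
  "downX S = {y \<in> PX. \<exists>x\<in>S. y \<subseteq> x}"

definition is_upsetX :: "'a::bounded_lattice set set \<Rightarrow> bool" where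
  "is_upsetX U \<longleftrightarrow> U \<subseteq> PX \<and> (\<forall>x\<in>U. \<forall>y\<in>PX. x \<subseteq> y \<longrightarrow> y \<in> U)"

definition clX :: "'a::bounded_lattice set set \<Rightarrow> 'a set set" where
  "clX S = priestley_top closure_of S"

definition cl2X :: "'a::bounded_lattice set set \<Rightarrow> 'a set set" where
  "cl2X S = upX (clX S)"

definition int1X :: "'a::bounded_lattice set set \<Rightarrow> 'a set set" where
  "int1X S = PX - downX (PX - priestley_top interior_of S)"

definition clopenX :: "'a::bounded_lattice set set \<Rightarrow> bool" where
  "clopenX U \<longleftrightarrow> openin priestley_top U \<and> closedin priestley_top U"

definition clopen_upsetX :: "'a::bounded_lattice set set \<Rightarrow> bool" where
  "clopen_upsetX U \<longleftrightarrow> clopenX U \<and> is_upsetX U"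

definition kappa_clopen_upsetX :: "'k rel \<Rightarrow> 'a::bounded_lattice set set \<Rightarrow> bool" where
  "kappa_clopen_upsetX \<kappa> U \<longleftrightarrow>
     (\<exists>F. |F| <o \<kappa> \<and> (\<forall>V\<in>F. clopen_upsetX V) \<and> U = \<Union>F)"

definition DMX :: "'a::bounded_lattice set set set" where
  "DMX = {U. openin priestley_top U \<and> is_upsetX U \<and> int1X (cl2X U) = U}"

definition BLkX :: "'k rel \<Rightarrow> 'a::bounded_lattice set set set" where
  "BLkX \<kappa> = {int1X (clX V) | V. kappa_clopen_upsetX \<kappa> V}"

definition extremally_order_disconnected :: "'a::bounded_lattice itself \<Rightarrow> bool" where
  "extremally_order_disconnected _ \<longleftrightarrow>
     (\<forall>U::'a set set. openin priestley_top U \<and> is_upsetX U \<longrightarrow> clopenX (cl2X U))"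

definition esakia :: "'a::bounded_lattice itself \<Rightarrow> bool" where
  "esakia _ \<longleftrightarrow> (\<forall>U::'a set set. clopenX U \<longrightarrow> clopenX (downX U))"

end

(* The Stone map a \<mapsto> sX a is, by the prime filter theorem and the compactness of X (Alexander
   subbase theorem), an order isomorphism of A onto the clopen upsets of X, and an open upset W is
   recovered from the downset ideal_of W = {a. sX a \<subseteq> W}. Through this dictionary, with
   U = \<Union>(sX ` S):
   - j is a join of S iff sX j = cl2X U, the least closed upset containing U, and a distributive
     join iff sX j = clX U;
   - the D-ideal generated by S is ideal_of (clX U), so the members of BL_\<kappa> A are the sets
     ideal_of (int1X (clX V)) for \<kappa>-clopen upsets V;
   - the relative annihilator of a and b is ideal_of (X - \<down>(sX a - sX b)); so b \<rightarrow> c exists iff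
     \<down>(sX b - sX c) is clopen, and the normal closure of ideal_of W is ideal_of (int1X (cl2X W)).
   Every clopen set is a finite union of sets sX a - sX b, and the properties in (3) and (4) are
   stable under finite intersections, so the four equivalences follow. *)

theory Submission
  imports Defs
begin

section \<open>Prime filters\<close>

definition lattice_filter :: "'a::bounded_lattice set \<Rightarrow> bool" where
  "lattice_filter F \<longleftrightarrow> top \<in> F \<and> (\<forall>x\<in>F. \<forall>y. x \<le> y \<longrightarrow> y \<in> F) \<and> (\<forall>x\<in>F. \<forall>y\<in>F. inf x y \<in> F)"

definition lattice_ideal :: "'a::bounded_lattice set \<Rightarrow> bool" where
  "lattice_ideal I \<longleftrightarrow> bot \<in> I \<and> (\<forall>x\<in>I. \<forall>y. y \<le> x \<longrightarrow> y \<in> I) \<and> (\<forall>x\<in>I. \<forall>y\<in>I. sup x y \<in> I)"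

lemma lattice_filter_Union_chain:
  assumes "\<C> \<noteq> {}" and chain: "subset.chain {F. lattice_filter F} \<C>"
  shows "lattice_filter (\<Union>\<C>)"
proof -
  have filt: "\<And>F. F \<in> \<C> \<Longrightarrow> lattice_filter F"
    and comp: "\<And>F G. F \<in> \<C> \<Longrightarrow> G \<in> \<C> \<Longrightarrow> F \<subseteq> G \<or> G \<subseteq> F"
    using chain unfolding subset.chain_def by auto
  obtain F0 where "F0 \<in> \<C>"
    using assms(1) by blast
  then have "top \<in> \<Union>\<C>"
    using filt unfolding lattice_filter_def by blast
  moreover have "y \<in> \<Union>\<C>" if "x \<in> \<Union>\<C>" "x \<le> y" for x y
    using that filt unfolding lattice_filter_def by blast
  moreover have "inf x y \<in> \<Union>\<C>" if xy: "x \<in> \<Union>\<C>" "y \<in> \<Union>\<C>" for x y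
  proof -
    obtain F G where FG: "F \<in> \<C>" "G \<in> \<C>" "x \<in> F" "y \<in> G"
      using xy by blast
    then have "x \<in> F \<and> y \<in> F \<and> F \<in> \<C> \<or> x \<in> G \<and> y \<in> G \<and> G \<in> \<C>"
      using comp[OF FG(1,2)] by blast
    then show ?thesis
      using filt unfolding lattice_filter_def by blast
  qed
  ultimately show ?thesis
    unfolding lattice_filter_def by blast
qed

lemma lattice_filter_adjoin:
  assumes M: "lattice_filter M"
  shows "lattice_filter {z. \<exists>p\<in>M. inf p x \<le> z}"
  unfolding lattice_filter_def
proof (intro conjI ballI allI impI)
  show "top \<in> {z. \<exists>p\<in>M. inf p x \<le> z}"
    using M unfolding lattice_filter_def by auto
next
  fix u v assume "u \<in> {z. \<exists>p\<in>M. inf p x \<le> z}" "u \<le> v"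
  then show "v \<in> {z. \<exists>p\<in>M. inf p x \<le> z}"
    using order_trans by blast
next
  fix u v assume "u \<in> {z. \<exists>p\<in>M. inf p x \<le> z}" "v \<in> {z. \<exists>p\<in>M. inf p x \<le> z}"
  then obtain p q where pq: "p \<in> M" "inf p x \<le> u" "q \<in> M" "inf q x \<le> v"
    by blast
  then have "inf (inf p q) x \<le> inf u v"
    using order_trans[OF inf_mono[OF inf_le1 order_refl]] order_trans[OF inf_mono[OF inf_le2 order_refl]]
    by (intro le_infI) blast+
  moreover have "inf p q \<in> M"
    using pq M unfolding lattice_filter_def by blast
  ultimately show "inf u v \<in> {z. \<exists>p\<in>M. inf p x \<le> z}"
    by blast
qed

text \<open>If \<open>x \<notin> M\<close>, maximality makes the filter generated by \<open>M\<close> and \<open>x\<close> meet the ideal.\<close>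

lemma maximal_filter_disjoint_prime:
  fixes M I :: "'a::{bounded_lattice,distrib_lattice} set"
  assumes M: "lattice_filter M" and I: "lattice_ideal I" and MI: "M \<inter> I = {}"
    and max: "\<And>G. lattice_filter G \<Longrightarrow> G \<inter> I = {} \<Longrightarrow> M \<subseteq> G \<Longrightarrow> G = M"
  shows "prime_filter M"
proof -
  have meets: "\<exists>p\<in>M. \<exists>i\<in>I. inf p x \<le> i" if x: "x \<notin> M" for x
  proof (rule ccontr)
    assume none: "\<not> ?thesis"
    let ?G = "{z. \<exists>p\<in>M. inf p x \<le> z}"
    have "?G \<inter> I = {}"
      using none I unfolding lattice_ideal_def by blast
    moreover have "M \<subseteq> ?G"
      by (auto intro: le_infI1)
    moreover have "x \<in> ?G"
      using M unfolding lattice_filter_def by force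
    ultimately show False
      using max[OF lattice_filter_adjoin[OF M]] x by blast
  qed
  have prime: "x \<in> M \<or> y \<in> M" if xy: "sup x y \<in> M" for x y
  proof (rule ccontr)
    assume "\<not> (x \<in> M \<or> y \<in> M)"
    then obtain p i q j where pi: "p \<in> M" "i \<in> I" "inf p x \<le> i"
      and qj: "q \<in> M" "j \<in> I" "inf q y \<le> j"
      using meets by meson
    define r where "r = inf (inf p q) (sup x y)"
    have "r \<in> M"
      using M pi qj xy unfolding r_def lattice_filter_def by blast
    moreover have "inf (inf p q) x \<le> i" "inf (inf p q) y \<le> j"
      using pi(3) qj(3) by (meson inf_le1 inf_le2 inf_mono order_refl order_trans)+
    then have "r \<le> sup i j"
      unfolding r_def inf_sup_distrib1 by (rule sup_mono)
    then have "r \<in> I"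
      using I pi(2) qj(2) unfolding lattice_ideal_def by blast
    ultimately show False
      using MI by blast
  qed
  have "bot \<notin> M"
    using MI I unfolding lattice_ideal_def by blast
  with M prime show ?thesis
    unfolding prime_filter_def lattice_filter_def by blast
qed

theorem prime_filter_theorem:
  fixes F I :: "'a::{bounded_lattice,distrib_lattice} set"
  assumes F: "lattice_filter F" and I: "lattice_ideal I" and FI: "F \<inter> I = {}"
  shows "\<exists>P. prime_filter P \<and> F \<subseteq> P \<and> P \<inter> I = {}"
proof -
  define \<A> where "\<A> = {G. lattice_filter G \<and> F \<subseteq> G \<and> G \<inter> I = {}}"
  have "\<Union>\<C> \<in> \<A>" if "\<C> \<noteq> {}" "subset.chain \<A> \<C>" for \<C>
  proof -
    have C: "\<C> \<subseteq> \<A>" "\<forall>F\<in>\<C>. \<forall>G\<in>\<C>. F \<subseteq> G \<or> G \<subseteq> F"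
      using that(2) unfolding subset.chain_def by auto
    moreover have "\<C> \<subseteq> {G. lattice_filter G}"
      using C(1) unfolding \<A>_def by blast
    ultimately have "lattice_filter (\<Union>\<C>)"
      using lattice_filter_Union_chain[OF that(1)] unfolding subset.chain_def by blast
    with C that(1) show ?thesis
      unfolding \<A>_def by auto
  qed
  moreover have "F \<in> \<A>"
    using F FI unfolding \<A>_def by blast
  ultimately obtain M where "M \<in> \<A>" "\<forall>G\<in>\<A>. M \<subseteq> G \<longrightarrow> G = M"
    using subset_Zorn_nonempty[of \<A>] by blast
  then have "prime_filter M"
    by (intro maximal_filter_disjoint_prime[OF _ I]) (auto simp: \<A>_def)
  with \<open>M \<in> \<A>\<close> show ?thesis
    unfolding \<A>_def by blast
qed

section \<open>The Stone map\<close>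

lemma PX_top: "P \<in> PX \<Longrightarrow> top \<in> P"
  and PX_bot: "P \<in> PX \<Longrightarrow> bot \<notin> P"
  and PX_upward: "P \<in> PX \<Longrightarrow> x \<in> P \<Longrightarrow> x \<le> y \<Longrightarrow> y \<in> P"
  unfolding PX_def prime_filter_def by blast+

lemma PX_inf_iff:
  assumes "P \<in> PX"
  shows "inf x y \<in> P \<longleftrightarrow> x \<in> P \<and> y \<in> P"
proof
  show "inf x y \<in> P \<Longrightarrow> x \<in> P \<and> y \<in> P"
    using PX_upward[OF assms _ inf_le1] PX_upward[OF assms _ inf_le2] by blast
  show "x \<in> P \<and> y \<in> P \<Longrightarrow> inf x y \<in> P"
    using assms unfolding PX_def prime_filter_def by blast
qed

lemma PX_sup_iff:
  fixes x y :: "'a::{bounded_lattice,distrib_lattice}"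
  assumes "P \<in> PX"
  shows "sup x y \<in> P \<longleftrightarrow> x \<in> P \<or> y \<in> P"
proof
  show "sup x y \<in> P \<Longrightarrow> x \<in> P \<or> y \<in> P"
    using assms unfolding PX_def prime_filter_def by blast
  show "x \<in> P \<or> y \<in> P \<Longrightarrow> sup x y \<in> P"
    using PX_upward[OF assms _ sup_ge1] PX_upward[OF assms _ sup_ge2] by blast
qed

lemma sX_subset_PX: "sX a \<subseteq> PX"
  unfolding sX_def by blast

lemma sX_inf: "sX (inf a b) = sX a \<inter> sX b"
  unfolding sX_def by (auto simp: PX_inf_iff)

lemma sX_sup: "sX (sup a b :: 'a::{bounded_lattice,distrib_lattice}) = sX a \<union> sX b"
  unfolding sX_def by (auto simp: PX_sup_iff)

lemma sX_top: "sX top = PX"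
  unfolding sX_def by (auto simp: PX_top)

lemma sX_bot: "sX bot = {}"
  unfolding sX_def by (auto simp: PX_bot)

lemma sX_mono: "a \<le> b \<Longrightarrow> sX a \<subseteq> sX b"
  unfolding sX_def by (auto intro: PX_upward)

lemma is_upsetX_sX: "is_upsetX (sX a)"
  unfolding is_upsetX_def sX_def by blast

lemma prime_filter_separates:
  fixes a b :: "'a::{bounded_lattice,distrib_lattice}"
  assumes "\<not> a \<le> b"
  shows "\<exists>P\<in>PX. a \<in> P \<and> b \<notin> P"
proof -
  have "lattice_filter {x. a \<le> x}" "lattice_ideal {x. x \<le> b}"
    unfolding lattice_filter_def lattice_ideal_def by auto
  moreover have "{x. a \<le> x} \<inter> {x. x \<le> b} = {}"
    using assms by (auto intro: order_trans)
  ultimately show ?thesis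
    using prime_filter_theorem unfolding PX_def by fastforce
qed

lemma sX_subset_iff: "sX (a::'a::{bounded_lattice,distrib_lattice}) \<subseteq> sX b \<longleftrightarrow> a \<le> b"
  using prime_filter_separates[of a b] sX_mono[of a b] unfolding sX_def by blast

lemma sX_finite_Inter:
  fixes A :: "'a::bounded_lattice set"
  assumes "finite A"
  shows "\<exists>m. sX m = PX \<inter> \<Inter>(sX ` A)"
  using assms
proof induction
  case empty
  show ?case
    using sX_top by auto
next
  case (insert a A)
  then obtain m where "sX m = PX \<inter> \<Inter>(sX ` A)"
    by blast
  then have "sX (inf a m) = PX \<inter> \<Inter>(sX ` insert a A)"
    using sX_subset_PX[of a] by (auto simp: sX_inf)
  then show ?case
    by blast
qed

lemma sX_finite_Union:
  fixes A :: "'a::{bounded_lattice,distrib_lattice} set"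
  assumes "finite A"
  shows "\<exists>m. sX m = \<Union>(sX ` A)"
  using assms
proof induction
  case empty
  show ?case
    using sX_bot by auto
next
  case (insert a A)
  then obtain m where "sX m = \<Union>(sX ` A)"
    by blast
  then have "sX (sup a m) = \<Union>(sX ` insert a A)"
    by (auto simp: sX_sup)
  then show ?case
    by blast
qed

definition ideal_of :: "'a::bounded_lattice set set \<Rightarrow> 'a set" where
  "ideal_of Q = {a. sX a \<subseteq> Q}"

lemma ideal_of_sX: "ideal_of (sX a) = {..a::'a::{bounded_lattice,distrib_lattice}}"
  unfolding ideal_of_def by (auto simp: sX_subset_iff)

lemma ideal_of_mono: "A \<subseteq> B \<Longrightarrow> ideal_of A \<subseteq> ideal_of B"
  unfolding ideal_of_def by blast

lemma ideal_of_PX_Inter: "ideal_of (PX \<inter> \<Inter>\<Q>) = \<Inter>(ideal_of ` \<Q>)"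
  unfolding ideal_of_def using sX_subset_PX by blast

lemma is_downset_ideal_of: "is_downset (ideal_of (Q :: 'a::bounded_lattice set set))"
  unfolding is_downset_def ideal_of_def using sX_mono by blast

section \<open>The Priestley topology\<close>

lemma topspace_priestley: "topspace (priestley_top :: 'a::bounded_lattice set topology) = PX"
proof -
  have "PX \<subseteq> \<Union>{sX a - sX b |a b::'a. True}"
    using sX_top[where 'a='a] sX_bot[where 'a='a] by blast
  moreover have "\<Union>{sX a - sX b |a b::'a. True} \<subseteq> PX"
    using sX_subset_PX by blast
  ultimately show ?thesis
    unfolding priestley_top_def by simp
qed

lemma openin_priestley_iff:
  "openin (priestley_top :: 'a::{bounded_lattice,distrib_lattice} set topology) W \<longleftrightarrow>
     W \<subseteq> PX \<and> (\<forall>x\<in>W. \<exists>a b. x \<in> sX a - sX b \<and> sX a - sX b \<subseteq> W)"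
proof
  assume W: "openin (priestley_top :: 'a set topology) W"
  then have "generate_topology_on {sX a - sX b |a b::'a. True} W"
    unfolding priestley_top_def by (rule openin_topology_generated_by)
  then have "\<forall>x\<in>W. \<exists>a b. x \<in> sX a - sX b \<and> sX a - sX b \<subseteq> W"
  proof induction
    case (Int U V)
    show ?case
    proof
      fix x assume x: "x \<in> U \<inter> V"
      obtain a1 b1 where "x \<in> sX a1 - sX b1" "sX a1 - sX b1 \<subseteq> U"
        using Int.IH(1) x by blast
      moreover obtain a2 b2 where "x \<in> sX a2 - sX b2" "sX a2 - sX b2 \<subseteq> V"
        using Int.IH(2) x by blast
      moreover have "sX (inf a1 a2) - sX (sup b1 b2) = (sX a1 - sX b1) \<inter> (sX a2 - sX b2)"
        by (auto simp: sX_inf sX_sup)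
      ultimately show "\<exists>a b. x \<in> sX a - sX b \<and> sX a - sX b \<subseteq> U \<inter> V"
        by (metis Int_iff Int_mono)
    qed
  next
    case (UN K)
    then show ?case
      by (meson UnionE Union_upper order_trans)
  qed auto
  with W show "W \<subseteq> PX \<and> (\<forall>x\<in>W. \<exists>a b. x \<in> sX a - sX b \<and> sX a - sX b \<subseteq> W)"
    using openin_subset topspace_priestley by metis
next
  assume W: "W \<subseteq> PX \<and> (\<forall>x\<in>W. \<exists>a b. x \<in> sX a - sX b \<and> sX a - sX b \<subseteq> W)"
  have "generate_topology_on {sX a - sX b |a b::'a. True} (\<Union>{sX a - sX b |a b. sX a - sX b \<subseteq> W})"
    by (rule generate_topology_on.UN) (auto intro: generate_topology_on.Basis)
  moreover have "W = \<Union>{sX a - sX b |a b. sX a - sX b \<subseteq> W}"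
    using W by blast
  ultimately show "openin priestley_top W"
    unfolding priestley_top_def openin_topology_generated_by_iff by simp
qed

lemma openin_sX_diff: "openin priestley_top (sX (a::'a::{bounded_lattice,distrib_lattice}) - sX b)"
  unfolding openin_priestley_iff using sX_subset_PX by blast

lemma openin_sX: "openin priestley_top (sX (a::'a::{bounded_lattice,distrib_lattice}))"
  using openin_sX_diff[of a bot] by (simp add: sX_bot)

lemma openin_PX_diff_sX: "openin priestley_top (PX - sX (a::'a::{bounded_lattice,distrib_lattice}))"
  using openin_sX_diff[of top a] by (simp add: sX_top)

lemma closedin_sX: "closedin priestley_top (sX (a::'a::{bounded_lattice,distrib_lattice}))"
  unfolding closedin_def topspace_priestley using openin_PX_diff_sX sX_subset_PX by blast

lemma closedin_sX_diff: "closedin priestley_top (sX (a::'a::{bounded_lattice,distrib_lattice}) - sX b)"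
  using closedin_diff[OF closedin_sX openin_sX] .

lemma clopenX_sX_diff: "clopenX (sX (a::'a::{bounded_lattice,distrib_lattice}) - sX b)"
  unfolding clopenX_def using openin_sX_diff closedin_sX_diff by blast

definition priestley_subbase :: "'a::bounded_lattice set set set" where
  "priestley_subbase = range sX \<union> range (\<lambda>b. PX - sX b)"

lemma sX_diff_subbasic:
  "(finite intersection_of (\<lambda>S. S \<in> priestley_subbase) relative_to PX) (sX a - sX b)"
  unfolding relative_to_def
proof (intro exI conjI)
  show "(finite intersection_of (\<lambda>S. S \<in> priestley_subbase)) (sX a \<inter> (PX - sX b))"
    unfolding priestley_subbase_def
    by (rule finite_intersection_of_Int; rule finite_intersection_of_inc) auto
  show "PX \<inter> (sX a \<inter> (PX - sX b)) = sX a - sX b"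
    using sX_subset_PX by blast
qed

lemma priestley_top_subbase:
  "topology (arbitrary union_of (finite intersection_of (\<lambda>S. S \<in> priestley_subbase) relative_to PX))
    = (priestley_top :: 'a::{bounded_lattice,distrib_lattice} set topology)"
proof (rule topology_base_unique)
  fix S :: "'a set set"
  assume "(finite intersection_of (\<lambda>S. S \<in> priestley_subbase) relative_to PX) S"
  then obtain \<F> where \<F>: "finite \<F>" "\<F> \<subseteq> priestley_subbase" "S = PX \<inter> \<Inter>\<F>"
    unfolding relative_to_def intersection_of_def by auto
  then have "openin priestley_top (\<Inter>(insert PX \<F>))"
    using openin_sX openin_PX_diff_sX openin_topspace[of "priestley_top :: 'a set topology"]
    by (intro openin_Inter) (auto simp: topspace_priestley priestley_subbase_def)
  then show "openin priestley_top S"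
    using \<F>(3) by simp
next
  fix U and x :: "'a set"
  assume "openin priestley_top U" "x \<in> U"
  then obtain a b where "x \<in> sX a - sX b" "sX a - sX b \<subseteq> U"
    unfolding openin_priestley_iff by blast
  with sX_diff_subbasic[of a b]
  show "\<exists>B. (finite intersection_of (\<lambda>S. S \<in> priestley_subbase) relative_to PX) B \<and> x \<in> B \<and> B \<subseteq> U"
    by (intro exI[of _ "sX a - sX b"] conjI)
qed

lemma lattice_filter_sX_generated:
  "lattice_filter {z. \<exists>B'. finite B' \<and> B' \<subseteq> B \<and> PX \<inter> \<Inter>(sX ` B') \<subseteq> sX z}"
  (is "lattice_filter ?F")
  unfolding lattice_filter_def
proof (intro conjI ballI allI impI)
  show "top \<in> ?F"
    by (intro CollectI exI[of _ "{}"]) (simp add: sX_top)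
  show "y \<in> ?F" if xy: "x \<in> ?F" "x \<le> y" for x y
  proof -
    obtain B' where "finite B'" "B' \<subseteq> B" "PX \<inter> \<Inter>(sX ` B') \<subseteq> sX x"
      using xy(1) by auto
    with sX_mono[OF xy(2)] show ?thesis
      by (intro CollectI exI[of _ B']) auto
  qed
  show "inf x y \<in> ?F" if xy: "x \<in> ?F" "y \<in> ?F" for x y
  proof -
    obtain B1 B2 where "finite B1" "B1 \<subseteq> B" "PX \<inter> \<Inter>(sX ` B1) \<subseteq> sX x"
      "finite B2" "B2 \<subseteq> B" "PX \<inter> \<Inter>(sX ` B2) \<subseteq> sX y"
      using xy by auto
    then show ?thesis
      by (intro CollectI exI[of _ "B1 \<union> B2"]) (auto simp: sX_inf)
  qed
qed

lemma lattice_ideal_sX_generated: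
  fixes A :: "'a::{bounded_lattice,distrib_lattice} set"
  shows "lattice_ideal {z. \<exists>A'. finite A' \<and> A' \<subseteq> A \<and> sX z \<subseteq> \<Union>(sX ` A')}"
  (is "lattice_ideal ?I")
  unfolding lattice_ideal_def
proof (intro conjI ballI allI impI)
  show "bot \<in> ?I"
    by (intro CollectI exI[of _ "{}"]) (simp add: sX_bot)
  show "y \<in> ?I" if xy: "x \<in> ?I" "y \<le> x" for x y
  proof -
    obtain A' where "finite A'" "A' \<subseteq> A" "sX x \<subseteq> \<Union>(sX ` A')"
      using xy(1) by auto
    with sX_mono[OF xy(2)] show ?thesis
      by (intro CollectI exI[of _ A']) auto
  qed
  show "sup x y \<in> ?I" if xy: "x \<in> ?I" "y \<in> ?I" for x y
  proof -
    obtain A1 A2 where "finite A1" "A1 \<subseteq> A" "sX x \<subseteq> \<Union>(sX ` A1)"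
      "finite A2" "A2 \<subseteq> A" "sX y \<subseteq> \<Union>(sX ` A2)"
      using xy by auto
    then show ?thesis
      by (intro CollectI exI[of _ "A1 \<union> A2"]) (auto simp: sX_sup)
  qed
qed

text \<open>The filter generated by \<open>B\<close> and the ideal generated by \<open>A\<close> are disjoint, as a common
  element would yield a finite subcover; a prime filter separating them is left uncovered.\<close>

lemma uncovered_prime_filter:
  fixes A B :: "'a::{bounded_lattice,distrib_lattice} set"
  assumes no_finite: "\<nexists>\<C>. finite \<C> \<and> \<C> \<subseteq> sX ` A \<union> (\<lambda>b. PX - sX b) ` B \<and> PX \<subseteq> \<Union>\<C>"
  shows "\<exists>P\<in>PX. B \<subseteq> P \<and> A \<inter> P = {}"
proof -
  define F where "F = {z. \<exists>B'. finite B' \<and> B' \<subseteq> B \<and> PX \<inter> \<Inter>(sX ` B') \<subseteq> sX z}"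
  define I where "I = {z. \<exists>A'. finite A' \<and> A' \<subseteq> A \<and> sX z \<subseteq> \<Union>(sX ` A')}"
  have "F \<inter> I = {}"
  proof (rule ccontr)
    assume "F \<inter> I \<noteq> {}"
    then obtain z B' A' where B': "finite B'" "B' \<subseteq> B" "PX \<inter> \<Inter>(sX ` B') \<subseteq> sX z"
      and A': "finite A'" "A' \<subseteq> A" "sX z \<subseteq> \<Union>(sX ` A')"
      unfolding F_def I_def by auto
    have "PX \<subseteq> \<Union>(sX ` A' \<union> (\<lambda>b. PX - sX b) ` B')"
      using B'(3) A'(3) by auto
    then have "\<exists>\<C>. finite \<C> \<and> \<C> \<subseteq> sX ` A \<union> (\<lambda>b. PX - sX b) ` B \<and> PX \<subseteq> \<Union>\<C>"
      using A' B' by (intro exI[of _ "sX ` A' \<union> (\<lambda>b. PX - sX b) ` B'"]) auto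
    with no_finite show False
      by (rule notE)
  qed
  moreover have "lattice_filter F"
    unfolding F_def by (rule lattice_filter_sX_generated)
  moreover have "lattice_ideal I"
    unfolding I_def by (rule lattice_ideal_sX_generated)
  ultimately obtain P where P: "prime_filter P" "F \<subseteq> P" "P \<inter> I = {}"
    using prime_filter_theorem by blast
  have "B \<subseteq> F"
    unfolding F_def by (auto intro!: exI[of _ "{b}" for b])
  moreover have "A \<subseteq> I"
    unfolding I_def by (auto intro!: exI[of _ "{a}" for a])
  ultimately show ?thesis
    using P unfolding PX_def by blast
qed

theorem compact_space_priestley:
  "compact_space (priestley_top :: 'a::{bounded_lattice,distrib_lattice} set topology)"
proof (rule Alexander_subbase_alt[OF _ _ priestley_top_subbase])
  show "PX \<subseteq> \<Union>(priestley_subbase :: 'a set set set)"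
    unfolding priestley_subbase_def using sX_top[where 'a='a] by auto
next
  fix \<C> :: "'a set set set"
  assume \<C>: "\<C> \<subseteq> priestley_subbase" "PX \<subseteq> \<Union>\<C>"
  define A where "A = {a. sX a \<in> \<C>}"
  define B where "B = {b. PX - sX b \<in> \<C>}"
  have \<C>_eq: "\<C> = sX ` A \<union> (\<lambda>b. PX - sX b) ` B"
    using \<C>(1) unfolding A_def B_def priestley_subbase_def by blast
  show "\<exists>\<C>'. finite \<C>' \<and> \<C>' \<subseteq> \<C> \<and> PX \<subseteq> \<Union>\<C>'"
  proof (rule ccontr)
    assume no_finite: "\<not> ?thesis"
    obtain P where P: "P \<in> PX" "B \<subseteq> P" "A \<inter> P = {}"
      using uncovered_prime_filter[OF no_finite[unfolded \<C>_eq]] by blast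
    then have "P \<in> \<Union>(sX ` A \<union> (\<lambda>b. PX - sX b) ` B)"
      using \<C>(2) unfolding \<C>_eq by blast
    with P(2,3) show False
      unfolding sX_def by blast
  qed
qed

section \<open>Separation by clopen upsets\<close>

lemma closedin_subset_PX:
  "closedin (priestley_top :: 'a::bounded_lattice set topology) C \<Longrightarrow> C \<subseteq> PX"
  using closedin_subset topspace_priestley by metis

lemma openin_subset_PX:
  "openin (priestley_top :: 'a::bounded_lattice set topology) U \<Longrightarrow> U \<subseteq> PX"
  using openin_subset topspace_priestley by metis

lemma closedin_PX_diff:
  "openin (priestley_top :: 'a::bounded_lattice set topology) U \<Longrightarrow> closedin priestley_top (PX - U)"
  using closedin_diff[OF closedin_topspace] topspace_priestley by metis

lemma openin_PX_diff:
  "closedin (priestley_top :: 'a::bounded_lattice set topology) C \<Longrightarrow> openin priestley_top (PX - C)"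
  using openin_diff[OF openin_topspace] topspace_priestley by metis

lemma closedin_priestley_finite_subcover:
  fixes C :: "'a::{bounded_lattice,distrib_lattice} set set"
  assumes "closedin priestley_top C" "\<And>U. U \<in> \<U> \<Longrightarrow> openin priestley_top U" "C \<subseteq> \<Union>\<U>"
  shows "\<exists>\<F>. finite \<F> \<and> \<F> \<subseteq> \<U> \<and> C \<subseteq> \<Union>\<F>"
  using closedin_compact_space[OF compact_space_priestley assms(1)] assms(2,3)
  unfolding compactin_def by blast

lemma downX_separation:
  fixes C :: "'a::{bounded_lattice,distrib_lattice} set set"
  assumes C: "closedin priestley_top C" and y: "y \<in> PX" "y \<notin> downX C"
  shows "\<exists>m. y \<in> sX m \<and> sX m \<inter> C = {}"
proof -
  have "C \<subseteq> \<Union>((\<lambda>a. PX - sX a) ` y)"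
    using y closedin_subset_PX[OF C] unfolding downX_def sX_def by blast
  with closedin_priestley_finite_subcover[OF C]
  obtain \<F> where \<F>: "finite \<F>" "\<F> \<subseteq> (\<lambda>a. PX - sX a) ` y" "C \<subseteq> \<Union>\<F>"
    using openin_PX_diff_sX by (metis (no_types, lifting) imageE)
  obtain A where A: "finite A" "A \<subseteq> y" "\<F> = (\<lambda>a. PX - sX a) ` A"
    using finite_subset_image[OF \<F>(1,2)] by blast
  obtain m where m: "sX m = PX \<inter> \<Inter>(sX ` A)"
    using sX_finite_Inter[OF A(1)] by blast
  have "y \<in> sX m"
    unfolding m using y(1) A(2) unfolding sX_def by blast
  moreover have "sX m \<inter> C = {}"
    unfolding m using \<F>(3) A(3) by blast
  ultimately show ?thesis
    by blast
qed

lemma upX_separation: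
  fixes C :: "'a::{bounded_lattice,distrib_lattice} set set"
  assumes C: "closedin priestley_top C" and y: "y \<in> PX" "y \<notin> upX C"
  shows "\<exists>m. C \<subseteq> sX m \<and> y \<notin> sX m"
proof -
  have "C \<subseteq> \<Union>(sX ` (- y))"
    using y closedin_subset_PX[OF C] unfolding upX_def sX_def by blast
  with closedin_priestley_finite_subcover[OF C]
  obtain \<F> where \<F>: "finite \<F>" "\<F> \<subseteq> sX ` (- y)" "C \<subseteq> \<Union>\<F>"
    using openin_sX by (metis (no_types, lifting) imageE)
  obtain B where B: "finite B" "B \<subseteq> - y" "\<F> = sX ` B"
    using finite_subset_image[OF \<F>(1,2)] by blast
  obtain m where m: "sX m = \<Union>(sX ` B)"
    using sX_finite_Union[OF B(1)] by blast
  have "y \<notin> sX m"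
    unfolding m using B(2) unfolding sX_def by blast
  with \<F>(3) B(3) m show ?thesis
    by auto
qed

lemma closedin_downX:
  fixes C :: "'a::{bounded_lattice,distrib_lattice} set set"
  assumes C: "closedin priestley_top C"
  shows "closedin priestley_top (downX C)"
proof -
  have "\<exists>T. openin priestley_top T \<and> y \<in> T \<and> T \<subseteq> PX - downX C" if y: "y \<in> PX - downX C" for y
  proof -
    obtain m where m: "y \<in> sX m" "sX m \<inter> C = {}"
      using downX_separation[OF C] y by blast
    have "sX m \<inter> downX C = {}"
      using m(2) closedin_subset_PX[OF C] unfolding downX_def sX_def by blast
    with m(1) show ?thesis
      using openin_sX sX_subset_PX by blast
  qed
  then have "openin priestley_top (PX - downX C)"
    by (subst openin_subopen) blast
  moreover have "downX C \<subseteq> PX"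
    unfolding downX_def by blast
  ultimately show ?thesis
    unfolding closedin_def topspace_priestley by (simp add: double_diff)
qed

lemma is_upsetX_PX_diff_downX: "is_upsetX (PX - downX C)"
  unfolding is_upsetX_def downX_def by blast

lemma openin_PX_diff_downX:
  "closedin priestley_top C \<Longrightarrow> openin priestley_top (PX - downX (C :: 'a::{bounded_lattice,distrib_lattice} set set))"
  by (intro openin_PX_diff closedin_downX)

lemma open_upset_sX_neighbourhood:
  fixes W :: "'a::{bounded_lattice,distrib_lattice} set set"
  assumes W: "openin priestley_top W" "is_upsetX W" and x: "x \<in> W"
  shows "\<exists>m. x \<in> sX m \<and> sX m \<subseteq> W"
proof -
  have "x \<notin> downX (PX - W)"
    using W(2) x unfolding downX_def is_upsetX_def by blast
  then obtain m where "x \<in> sX m" "sX m \<inter> (PX - W) = {}"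
    using downX_separation[OF closedin_PX_diff[OF W(1)]] x openin_subset_PX[OF W(1)] by blast
  then show ?thesis
    using sX_subset_PX by blast
qed

lemma Union_sX_ideal_of:
  fixes W :: "'a::{bounded_lattice,distrib_lattice} set set"
  assumes "openin priestley_top W" "is_upsetX W"
  shows "\<Union>(sX ` ideal_of W) = W"
  unfolding ideal_of_def using open_upset_sX_neighbourhood[OF assms] by blast

lemma ideal_of_inject:
  fixes W W' :: "'a::{bounded_lattice,distrib_lattice} set set"
  assumes "openin priestley_top W" "is_upsetX W" "openin priestley_top W'" "is_upsetX W'"
  shows "ideal_of W = ideal_of W' \<longleftrightarrow> W = W'"
  using Union_sX_ideal_of[OF assms(1,2)] Union_sX_ideal_of[OF assms(3,4)] by metis

lemma clopen_upset_eq_sX: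
  fixes W :: "'a::{bounded_lattice,distrib_lattice} set set"
  assumes "openin priestley_top W" "closedin priestley_top W" "is_upsetX W"
  shows "\<exists>a. W = sX a"
proof -
  have "W \<subseteq> \<Union>(sX ` ideal_of W)"
    using Union_sX_ideal_of[OF assms(1,3)] by simp
  with closedin_priestley_finite_subcover[OF assms(2)]
  obtain \<F> where \<F>: "finite \<F>" "\<F> \<subseteq> sX ` ideal_of W" "W \<subseteq> \<Union>\<F>"
    using openin_sX by (metis (no_types, lifting) imageE)
  obtain A where A: "finite A" "A \<subseteq> ideal_of W" "\<F> = sX ` A"
    using finite_subset_image[OF \<F>(1,2)] by blast
  obtain a where "sX a = \<Union>(sX ` A)"
    using sX_finite_Union[OF A(1)] by blast
  with \<F>(3) A(2,3) have "W = sX a"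
    unfolding ideal_of_def by auto
  then show ?thesis ..
qed

lemma clopen_eq_finite_Union_sX_diff:
  fixes U :: "'a::{bounded_lattice,distrib_lattice} set set"
  assumes "clopenX U"
  shows "\<exists>K. finite K \<and> U = (\<Union>(a, b)\<in>K. sX a - sX b)"
proof -
  have U: "openin priestley_top U" "closedin priestley_top U"
    using assms unfolding clopenX_def by auto
  define K where "K = {(a, b). sX a - sX b \<subseteq> U}"
  have "U \<subseteq> \<Union>((\<lambda>(a, b). sX a - sX b) ` K)"
  proof
    fix x assume "x \<in> U"
    then obtain a b where "x \<in> sX a - sX b" "sX a - sX b \<subseteq> U"
      using U(1) unfolding openin_priestley_iff by blast
    then show "x \<in> \<Union>((\<lambda>(a, b). sX a - sX b) ` K)"
      unfolding K_def by (intro UN_I[of "(a, b)"]) auto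
  qed
  with closedin_priestley_finite_subcover[OF U(2)]
  obtain \<F> where \<F>: "finite \<F>" "\<F> \<subseteq> (\<lambda>(a, b). sX a - sX b) ` K" "U \<subseteq> \<Union>\<F>"
    using openin_sX_diff by (metis (no_types, lifting) case_prod_beta imageE)
  obtain K' where "finite K'" "K' \<subseteq> K" "\<F> = (\<lambda>(a, b). sX a - sX b) ` K'"
    using finite_subset_image[OF \<F>(1,2)] by blast
  with \<F>(3) have "finite K'" "K' \<subseteq> K" "U \<subseteq> (\<Union>(a, b)\<in>K'. sX a - sX b)"
    by auto
  moreover from this have "(\<Union>(a, b)\<in>K'. sX a - sX b) \<subseteq> U"
    unfolding K_def by auto
  ultimately show ?thesis
    by blast
qed

section \<open>Closures and order interiors\<close>

lemma openin_subset_closure_of_Int: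
  assumes "openin X U" "openin X V" "U \<subseteq> X closure_of V" "U \<subseteq> X closure_of W"
  shows "U \<subseteq> X closure_of (V \<inter> W)"
proof -
  have "U \<inter> V \<subseteq> X closure_of (U \<inter> V \<inter> W)"
    using openin_Int_closure_of_subset[OF openin_Int[OF assms(1,2)], of W] assms(4) by blast
  also have "\<dots> \<subseteq> X closure_of (V \<inter> W)"
    by (rule closure_of_mono) blast
  finally have "X closure_of (U \<inter> V) \<subseteq> X closure_of (V \<inter> W)"
    by (simp add: closure_of_minimal)
  moreover have "U \<subseteq> X closure_of (U \<inter> V)"
    using openin_Int_closure_of_subset[OF assms(1), of V] assms(3) by blast
  ultimately show ?thesis
    by blast
qed

lemma closure_of_Union_squeeze:
  assumes "\<And>i. i \<in> I \<Longrightarrow> V i \<subseteq> A i \<and> A i \<subseteq> X closure_of V i"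
  shows "X closure_of (\<Union>i\<in>I. A i) = X closure_of (\<Union>i\<in>I. V i)"
proof
  have "(\<Union>i\<in>I. A i) \<subseteq> X closure_of (\<Union>i\<in>I. V i)"
    using assms closure_of_mono[of "V _" "\<Union>i\<in>I. V i" X] by blast
  then show "X closure_of (\<Union>i\<in>I. A i) \<subseteq> X closure_of (\<Union>i\<in>I. V i)"
    by (simp add: closure_of_minimal)
  show "X closure_of (\<Union>i\<in>I. V i) \<subseteq> X closure_of (\<Union>i\<in>I. A i)"
    using assms by (intro closure_of_mono) blast
qed

lemma subset_clX: "V \<subseteq> PX \<Longrightarrow> V \<subseteq> clX (V :: 'a::bounded_lattice set set)"
  unfolding clX_def using closure_of_subset topspace_priestley by metis

lemma clX_subset_sX: "U \<subseteq> sX a \<Longrightarrow> clX U \<subseteq> sX (a::'a::{bounded_lattice,distrib_lattice})"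
  unfolding clX_def by (rule closure_of_minimal[OF _ closedin_sX])

lemma sX_Int_clX: "sX a \<inter> clX U = clX (sX (a::'a::{bounded_lattice,distrib_lattice}) \<inter> U)"
proof
  show "sX a \<inter> clX U \<subseteq> clX (sX a \<inter> U)"
    unfolding clX_def by (rule openin_Int_closure_of_subset[OF openin_sX])
  show "clX (sX a \<inter> U) \<subseteq> sX a \<inter> clX U"
    using clX_subset_sX[of "sX a \<inter> U" a] closure_of_mono[of "sX a \<inter> U" U] unfolding clX_def by blast
qed

lemma int1X_subset: "int1X S \<subseteq> S"
  unfolding int1X_def downX_def using interior_of_subset[of priestley_top S] by auto

lemma is_upsetX_int1X: "is_upsetX (int1X S)"
  unfolding is_upsetX_def int1X_def downX_def by blast

lemma openin_int1X: "openin priestley_top (int1X (S :: 'a::{bounded_lattice,distrib_lattice} set set))"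
  unfolding int1X_def
  by (intro openin_PX_diff closedin_downX closedin_PX_diff openin_interior_of)

lemma int1X_maximal:
  assumes "openin priestley_top W" "is_upsetX W" "W \<subseteq> S"
  shows "W \<subseteq> int1X S"
proof -
  have "W \<subseteq> priestley_top interior_of S"
    using interior_of_maximal[OF assms(3,1)] .
  with assms(2) show ?thesis
    unfolding int1X_def downX_def is_upsetX_def by blast
qed

lemma sX_subset_int1X_iff:
  "sX a \<subseteq> int1X S \<longleftrightarrow> sX (a::'a::{bounded_lattice,distrib_lattice}) \<subseteq> S"
  by (meson int1X_maximal[OF openin_sX is_upsetX_sX] int1X_subset order_trans)

lemma ideal_of_int1X: "ideal_of (int1X S) = ideal_of (S :: 'a::{bounded_lattice,distrib_lattice} set set)"
  unfolding ideal_of_def by (simp add: sX_subset_int1X_iff)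

lemma Union_sX_ideal_of_clX_squeeze:
  fixes V :: "'a::{bounded_lattice,distrib_lattice} set set"
  assumes "openin priestley_top V" "is_upsetX V"
  shows "V \<subseteq> \<Union>(sX ` ideal_of (clX V)) \<and> \<Union>(sX ` ideal_of (clX V)) \<subseteq> priestley_top closure_of V"
proof
  have "ideal_of V \<subseteq> ideal_of (clX V)"
    using subset_clX[OF openin_subset_PX[OF assms(1)]] by (rule ideal_of_mono)
  then show "V \<subseteq> \<Union>(sX ` ideal_of (clX V))"
    using Union_sX_ideal_of[OF assms] by blast
  show "\<Union>(sX ` ideal_of (clX V)) \<subseteq> priestley_top closure_of V"
    unfolding ideal_of_def clX_def by blast
qed

section \<open>Joins as closures\<close>

lemma is_join_iff_upper_bounds:
  "is_join S j \<longleftrightarrow> (\<forall>v. j \<le> v \<longleftrightarrow> (\<forall>s\<in>S. s \<le> v))"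
  unfolding is_join_def by (meson order_refl order_trans)

lemma cl2X_eq_Inter_sX:
  fixes U :: "'a::{bounded_lattice,distrib_lattice} set set"
  assumes "U \<subseteq> PX"
  shows "cl2X U = PX \<inter> \<Inter>{sX v |v. U \<subseteq> sX v}"
proof
  show "cl2X U \<subseteq> PX \<inter> \<Inter>{sX v |v. U \<subseteq> sX v}"
    unfolding cl2X_def upX_def using clX_subset_sX is_upsetX_sX unfolding is_upsetX_def by blast
  show "PX \<inter> \<Inter>{sX v |v. U \<subseteq> sX v} \<subseteq> cl2X U"
  proof
    fix y assume y: "y \<in> PX \<inter> \<Inter>{sX v |v. U \<subseteq> sX v}"
    show "y \<in> cl2X U"
    proof (rule ccontr)
      assume "y \<notin> cl2X U"
      then obtain m where m: "clX U \<subseteq> sX m" "y \<notin> sX m"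
        using upX_separation[of "clX U" y] y unfolding cl2X_def clX_def by auto
      moreover have "U \<subseteq> sX m"
        using subset_clX[OF assms] m(1) by blast
      ultimately show False
        using y by blast
    qed
  qed
qed

lemma cl2X_subset_sX_iff:
  fixes U :: "'a::{bounded_lattice,distrib_lattice} set set"
  assumes "U \<subseteq> PX"
  shows "cl2X U \<subseteq> sX v \<longleftrightarrow> U \<subseteq> sX v"
proof
  show "cl2X U \<subseteq> sX v \<Longrightarrow> U \<subseteq> sX v"
    using subset_clX[OF assms] assms unfolding cl2X_def upX_def by blast
  show "U \<subseteq> sX v \<Longrightarrow> cl2X U \<subseteq> sX v"
    unfolding cl2X_eq_Inter_sX[OF assms] by blast
qed

lemma is_join_iff_cl2X:
  fixes S :: "'a::{bounded_lattice,distrib_lattice} set"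
  shows "is_join S j \<longleftrightarrow> sX j = cl2X (\<Union>(sX ` S))"
proof -
  have U: "\<Union>(sX ` S) \<subseteq> PX"
    using sX_subset_PX by blast
  have ub: "(\<forall>s\<in>S. s \<le> v) \<longleftrightarrow> cl2X (\<Union>(sX ` S)) \<subseteq> sX v" for v
    unfolding cl2X_subset_sX_iff[OF U] by (simp add: UN_subset_iff sX_subset_iff)
  show ?thesis
  proof
    assume "is_join S j"
    then have "sX j \<subseteq> sX v \<longleftrightarrow> cl2X (\<Union>(sX ` S)) \<subseteq> sX v" for v
      unfolding is_join_iff_upper_bounds sX_subset_iff ub by blast
    then show "sX j = cl2X (\<Union>(sX ` S))"
      unfolding cl2X_eq_Inter_sX[OF U] using sX_subset_PX by blast
  next
    assume eq: "sX j = cl2X (\<Union>(sX ` S))"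
    have "j \<le> v \<longleftrightarrow> cl2X (\<Union>(sX ` S)) \<subseteq> sX v" for v
      by (simp add: eq[symmetric] sX_subset_iff)
    then show "is_join S j"
      unfolding is_join_iff_upper_bounds ub by blast
  qed
qed

lemma Union_sX_inf_image: "\<Union>(sX ` inf a ` S) = sX a \<inter> \<Union>(sX ` S)"
  by (auto simp: sX_inf)

lemma is_join_if_sX_eq_clX:
  fixes S :: "'a::{bounded_lattice,distrib_lattice} set"
  assumes eq: "sX j = clX (\<Union>(sX ` S))"
  shows "is_join S j"
  unfolding is_join_def
proof (intro conjI ballI allI impI)
  fix s assume "s \<in> S"
  then have "sX s \<subseteq> clX (\<Union>(sX ` S))"
    using subset_clX[of "\<Union>(sX ` S)"] sX_subset_PX by blast
  then show "s \<le> j"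
    unfolding eq[symmetric] sX_subset_iff .
next
  fix u assume "\<forall>s\<in>S. s \<le> u"
  then have "clX (\<Union>(sX ` S)) \<subseteq> sX u"
    by (intro clX_subset_sX) (auto dest: sX_mono)
  then show "j \<le> u"
    unfolding eq[symmetric] sX_subset_iff .
qed

text \<open>If a point of \<open>sX j\<close> had a basic neighbourhood \<open>sX p - sX q\<close> missing \<open>\<Union>(sX ` S)\<close>, then
  \<open>inf p s \<le> q\<close> for all \<open>s \<in> S\<close>, and distributivity would give \<open>inf p j \<le> q\<close>.\<close>

lemma sX_distributive_join_subset_clX:
  fixes S :: "'a::{bounded_lattice,distrib_lattice} set"
  assumes dj: "distributive_join S j"
  shows "sX j \<subseteq> clX (\<Union>(sX ` S))"
proof
  fix y assume y: "y \<in> sX j"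
  show "y \<in> clX (\<Union>(sX ` S))"
  proof (rule ccontr)
    assume "y \<notin> clX (\<Union>(sX ` S))"
    moreover have "openin priestley_top (sX j \<inter> (PX - clX (\<Union>(sX ` S))))"
      unfolding clX_def by (intro openin_Int openin_sX openin_PX_diff closedin_closure_of)
    ultimately obtain p q where pq: "y \<in> sX p - sX q" "sX p - sX q \<subseteq> sX j \<inter> (PX - clX (\<Union>(sX ` S)))"
      using y sX_subset_PX unfolding openin_priestley_iff by blast
    have "inf p s \<le> q" if "s \<in> S" for s
    proof -
      have "sX s \<subseteq> clX (\<Union>(sX ` S))"
        using that subset_clX[of "\<Union>(sX ` S)"] sX_subset_PX by blast
      with pq(2) have "sX (inf p s) \<subseteq> sX q"
        by (auto simp: sX_inf)
      then show ?thesis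
        unfolding sX_subset_iff .
    qed
    then have "inf p j \<le> q"
      using dj unfolding distributive_join_def is_join_def by blast
    then show False
      using pq(1) y sX_mono[of "inf p j" q] by (auto simp: sX_inf)
  qed
qed

lemma distributive_join_iff_clX:
  fixes S :: "'a::{bounded_lattice,distrib_lattice} set"
  shows "distributive_join S j \<longleftrightarrow> sX j = clX (\<Union>(sX ` S))"
proof
  assume dj: "distributive_join S j"
  then have "\<Union>(sX ` S) \<subseteq> sX j"
    unfolding distributive_join_def is_join_def using sX_mono by blast
  then show "sX j = clX (\<Union>(sX ` S))"
    using clX_subset_sX sX_distributive_join_subset_clX[OF dj] by blast
next
  assume eq: "sX j = clX (\<Union>(sX ` S))"
  have "sX (inf a j) = clX (\<Union>(sX ` inf a ` S))" for a
    unfolding Union_sX_inf_image sX_Int_clX[symmetric] sX_inf eq ..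
  with eq show "distributive_join S j"
    unfolding distributive_join_def by (simp add: is_join_if_sX_eq_clX)
qed

lemma distributive_join_inf_image:
  fixes S :: "'a::{bounded_lattice,distrib_lattice} set"
  assumes "sX x \<subseteq> clX (\<Union>(sX ` S))"
  shows "distributive_join (inf x ` S) x"
  unfolding distributive_join_iff_clX Union_sX_inf_image sX_Int_clX[symmetric]
  using assms by blast

section \<open>D-ideals and the sub-\<kappa>-frame generated by the lattice\<close>

lemma D_ideal_ideal_of_clX: "D_ideal (ideal_of (clX (V :: 'a::{bounded_lattice,distrib_lattice} set set)))"
  unfolding D_ideal_def
proof (intro conjI allI impI)
  show "is_downset (ideal_of (clX V))"
    by (rule is_downset_ideal_of)
  fix S j assume S: "S \<subseteq> ideal_of (clX V)" and "distributive_join S j"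
  then have "sX j = clX (\<Union>(sX ` S))"
    by (simp add: distributive_join_iff_clX)
  also have "\<dots> \<subseteq> clX V"
    using S unfolding ideal_of_def clX_def by (intro closure_of_minimal) auto
  finally show "j \<in> ideal_of (clX V)"
    unfolding ideal_of_def by simp
qed

lemma D_gen_eq_ideal_of_clX:
  fixes S :: "'a::{bounded_lattice,distrib_lattice} set"
  shows "D_gen S = ideal_of (clX (\<Union>(sX ` S)))"
proof
  have "S \<subseteq> ideal_of (clX (\<Union>(sX ` S)))"
    unfolding ideal_of_def using subset_clX[of "\<Union>(sX ` S)"] sX_subset_PX by blast
  then show "D_gen S \<subseteq> ideal_of (clX (\<Union>(sX ` S)))"
    unfolding D_gen_def using D_ideal_ideal_of_clX by blast
  show "ideal_of (clX (\<Union>(sX ` S))) \<subseteq> D_gen S"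
  proof
    fix x assume "x \<in> ideal_of (clX (\<Union>(sX ` S)))"
    then have dj: "distributive_join (inf x ` S) x"
      unfolding ideal_of_def by (simp add: distributive_join_inf_image)
    show "x \<in> D_gen S"
      unfolding D_gen_def
    proof
      fix D assume "D \<in> {D. D_ideal D \<and> S \<subseteq> D}"
      then have D: "D_ideal D" "S \<subseteq> D"
        by auto
      have "inf x s \<in> D" if "s \<in> S" for s
        using D that inf_le2[of x s] unfolding D_ideal_def is_downset_def by blast
      then have "inf x ` S \<subseteq> D"
        by blast
      with D(1) dj show "x \<in> D"
        unfolding D_ideal_def by blast
    qed
  qed
qed

lemma D_gen_Union_ideal_of_clX:
  fixes V :: "'a::{bounded_lattice,distrib_lattice} set \<Rightarrow> 'a set set"
  assumes "\<And>I. I \<in> \<F> \<Longrightarrow> openin priestley_top (V I) \<and> is_upsetX (V I) \<and> I = ideal_of (clX (V I))"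
  shows "D_gen (\<Union>\<F>) = ideal_of (clX (\<Union>(V ` \<F>)))"
proof -
  have "V I \<subseteq> \<Union>(sX ` I) \<and> \<Union>(sX ` I) \<subseteq> priestley_top closure_of V I" if "I \<in> \<F>" for I
    using Union_sX_ideal_of_clX_squeeze assms[OF that] by metis
  then have "clX (\<Union>I\<in>\<F>. \<Union>(sX ` I)) = clX (\<Union>I\<in>\<F>. V I)"
    unfolding clX_def by (rule closure_of_Union_squeeze)
  then show ?thesis
    unfolding D_gen_eq_ideal_of_clX by (simp add: UN_simps)
qed

lemma ideal_of_clX_Int:
  fixes V W :: "'a::{bounded_lattice,distrib_lattice} set set"
  assumes "openin priestley_top V"
  shows "ideal_of (clX V) \<inter> ideal_of (clX W) = ideal_of (clX (V \<inter> W))"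
proof
  show "ideal_of (clX V) \<inter> ideal_of (clX W) \<subseteq> ideal_of (clX (V \<inter> W))"
    unfolding ideal_of_def clX_def using openin_subset_closure_of_Int[OF openin_sX assms] by blast
  show "ideal_of (clX (V \<inter> W)) \<subseteq> ideal_of (clX V) \<inter> ideal_of (clX W)"
    unfolding clX_def by (intro Int_greatest ideal_of_mono closure_of_mono) auto
qed

lemma finite_ordLess_Cinfinite: "finite A \<Longrightarrow> Cinfinite \<kappa> \<Longrightarrow> |A| <o \<kappa>"
  by (intro Cfinite_ordLess_Cinfinite) (auto simp: cfinite_def card_of_card_order_on Field_card_of)

lemma kappa_clopen_upsetX_iff:
  "kappa_clopen_upsetX \<kappa> V \<longleftrightarrow>
     (\<exists>S. |S| <o \<kappa> \<and> V = \<Union>(sX ` S :: 'a::{bounded_lattice,distrib_lattice} set set set))"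
proof
  assume "kappa_clopen_upsetX \<kappa> V"
  then obtain \<F> where \<F>: "|\<F>| <o \<kappa>" "\<forall>W\<in>\<F>. clopen_upsetX W" "V = \<Union>\<F>"
    unfolding kappa_clopen_upsetX_def by blast
  then have "\<forall>W\<in>\<F>. \<exists>a. W = sX a"
    unfolding clopen_upsetX_def clopenX_def using clopen_upset_eq_sX by blast
  then obtain g where g: "\<forall>W\<in>\<F>. W = sX (g W)"
    by metis
  then have "V = \<Union>(sX ` g ` \<F>)"
    using \<F>(3) by auto
  moreover have "|g ` \<F>| <o \<kappa>"
    using ordLeq_ordLess_trans[OF card_of_image \<F>(1)] .
  ultimately show "\<exists>S. |S| <o \<kappa> \<and> V = \<Union>(sX ` S)"
    by blast
next
  assume "\<exists>S. |S| <o \<kappa> \<and> V = \<Union>(sX ` S :: 'a set set set)"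
  then obtain S where "|S| <o \<kappa>" "V = \<Union>(sX ` S)"
    by blast
  moreover have "|sX ` S| <o \<kappa>"
    using ordLeq_ordLess_trans[OF card_of_image \<open>|S| <o \<kappa>\<close>] .
  ultimately show "kappa_clopen_upsetX \<kappa> V"
    unfolding kappa_clopen_upsetX_def clopen_upsetX_def clopenX_def
    using openin_sX closedin_sX is_upsetX_sX by blast
qed

lemma kappa_clopen_upsetX_open_upset:
  fixes V :: "'a::{bounded_lattice,distrib_lattice} set set"
  assumes "kappa_clopen_upsetX \<kappa> V"
  shows "openin priestley_top V" "is_upsetX V"
  using assms openin_sX is_upsetX_sX unfolding kappa_clopen_upsetX_iff is_upsetX_def
  by (auto intro!: openin_Union)

lemma kappa_clopen_upsetX_sX:
  "Cinfinite \<kappa> \<Longrightarrow> kappa_clopen_upsetX \<kappa> (sX (a::'a::{bounded_lattice,distrib_lattice}))"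
  unfolding kappa_clopen_upsetX_iff using finite_ordLess_Cinfinite[of "{a}"] by (intro exI[of _ "{a}"]) auto

lemma kappa_clopen_upsetX_Int:
  fixes V W :: "'a::{bounded_lattice,distrib_lattice} set set"
  assumes \<kappa>: "Cinfinite \<kappa>" "regularCard \<kappa>"
    and "kappa_clopen_upsetX \<kappa> V" "kappa_clopen_upsetX \<kappa> W"
  shows "kappa_clopen_upsetX \<kappa> (V \<inter> W)"
proof -
  obtain S T where S: "|S| <o \<kappa>" "V = \<Union>(sX ` S)" and T: "|T| <o \<kappa>" "W = \<Union>(sX ` T)"
    using assms(3,4) unfolding kappa_clopen_upsetX_iff by blast
  have "|\<Union>a\<in>S. inf a ` T| <o \<kappa>"
    using ordLeq_ordLess_trans[OF card_of_image T(1)] by (rule regularCard_UNION_bound[OF \<kappa> S(1)])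
  moreover have "V \<inter> W = \<Union>(sX ` (\<Union>a\<in>S. inf a ` T))"
    unfolding S(2) T(2) by (auto simp: sX_inf)
  ultimately show ?thesis
    unfolding kappa_clopen_upsetX_iff by blast
qed

lemma kappa_clopen_upsetX_Union:
  fixes \<V> :: "'a::{bounded_lattice,distrib_lattice} set set set"
  assumes \<kappa>: "Cinfinite \<kappa>" "regularCard \<kappa>"
    and "|\<V>| <o \<kappa>" "\<forall>V\<in>\<V>. kappa_clopen_upsetX \<kappa> V"
  shows "kappa_clopen_upsetX \<kappa> (\<Union>\<V>)"
proof -
  obtain g where g: "\<forall>V\<in>\<V>. |g V| <o \<kappa> \<and> V = \<Union>(sX ` g V)"
    using assms(4) unfolding kappa_clopen_upsetX_iff by metis
  then have "|\<Union>V\<in>\<V>. g V| <o \<kappa>"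
    by (intro regularCard_UNION_bound[OF \<kappa> assms(3)]) blast
  moreover have "\<Union>\<V> = \<Union>(sX ` (\<Union>V\<in>\<V>. g V))"
    using g by auto
  ultimately show ?thesis
    unfolding kappa_clopen_upsetX_iff by blast
qed

lemma Union_sX_Union_atMost: "\<Union>(sX ` \<Union>((\<lambda>c. {..c}) ` S)) = \<Union>(sX ` S)"
  using sX_mono by fastforce

lemma ideal_of_clX_in_BLk:
  fixes V :: "'a::{bounded_lattice,distrib_lattice} set set"
  assumes "kappa_clopen_upsetX \<kappa> V"
  shows "ideal_of (clX V) \<in> BLk \<kappa>"
proof -
  obtain S where S: "|S| <o \<kappa>" "V = \<Union>(sX ` S)"
    using assms unfolding kappa_clopen_upsetX_iff by blast
  have "D_gen (\<Union>((\<lambda>c. {..c}) ` S)) \<in> BLk \<kappa>"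
    using ordLeq_ordLess_trans[OF card_of_image S(1)] by (intro BLk.join) (auto intro: BLk.princ)
  then show ?thesis
    unfolding D_gen_eq_ideal_of_clX Union_sX_Union_atMost S(2) .
qed

lemma BLk_iff:
  fixes \<kappa> :: "'k rel" and I :: "'a::{bounded_lattice,distrib_lattice} set"
  assumes \<kappa>: "Cinfinite \<kappa>" "regularCard \<kappa>"
  shows "I \<in> BLk \<kappa> \<longleftrightarrow> (\<exists>V. kappa_clopen_upsetX \<kappa> V \<and> I = ideal_of (clX V))"
proof
  assume "I \<in> BLk \<kappa>"
  then show "\<exists>V. kappa_clopen_upsetX \<kappa> V \<and> I = ideal_of (clX V)"
  proof induction
    case (princ a)
    have "clX (sX a) = sX a"
      unfolding clX_def by (rule closure_of_closedin[OF closedin_sX])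
    then show ?case
      using kappa_clopen_upsetX_sX[OF \<kappa>(1)] ideal_of_sX by metis
  next
    case (meet I J)
    then obtain V W where "kappa_clopen_upsetX \<kappa> V" "I = ideal_of (clX V)"
      "kappa_clopen_upsetX \<kappa> W" "J = ideal_of (clX W)"
      by blast
    then show ?case
      using kappa_clopen_upsetX_Int[OF \<kappa>] ideal_of_clX_Int kappa_clopen_upsetX_open_upset(1) by metis
  next
    case (join \<F>)
    then have "\<forall>I\<in>\<F>. \<exists>V. kappa_clopen_upsetX \<kappa> V \<and> I = ideal_of (clX V)"
      by blast
    from bchoice[OF this]
    obtain V where V: "\<forall>I\<in>\<F>. kappa_clopen_upsetX \<kappa> (V I) \<and> I = ideal_of (clX (V I))"
      by blast
    have "openin priestley_top (V I) \<and> is_upsetX (V I) \<and> I = ideal_of (clX (V I))" if "I \<in> \<F>" for I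
      using V that kappa_clopen_upsetX_open_upset[of \<kappa> "V I"] by simp
    then have "D_gen (\<Union>\<F>) = ideal_of (clX (\<Union>(V ` \<F>)))"
      by (rule D_gen_Union_ideal_of_clX)
    moreover have "kappa_clopen_upsetX \<kappa> (\<Union>(V ` \<F>))"
      using V ordLeq_ordLess_trans[OF card_of_image join.hyps]
      by (intro kappa_clopen_upsetX_Union[OF \<kappa>]) auto
    ultimately show ?case
      by blast
  qed
next
  assume "\<exists>V. kappa_clopen_upsetX \<kappa> V \<and> I = ideal_of (clX V)"
  then show "I \<in> BLk \<kappa>"
    using ideal_of_clX_in_BLk by blast
qed

lemma ideal_of_in_BLk_iff:
  fixes \<kappa> :: "'k rel" and W :: "'a::{bounded_lattice,distrib_lattice} set set"
  assumes "Cinfinite \<kappa>" "regularCard \<kappa>" and W: "openin priestley_top W" "is_upsetX W"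
  shows "ideal_of W \<in> BLk \<kappa> \<longleftrightarrow> W \<in> BLkX \<kappa>"
proof -
  have "ideal_of W = ideal_of (clX V) \<longleftrightarrow> W = int1X (clX V)" for V
    using ideal_of_inject[OF W openin_int1X is_upsetX_int1X] by (simp add: ideal_of_int1X)
  then show ?thesis
    unfolding BLk_iff[OF assms(1,2)] BLkX_def by blast
qed

section \<open>Relative annihilators and normal ideals\<close>

lemma rel_ann_eq_ideal_of: "rel_ann a b = ideal_of (PX - downX (sX a - sX (b::'a::{bounded_lattice,distrib_lattice})))"
proof -
  have "sX x \<subseteq> PX - downX (sX a - sX b) \<longleftrightarrow> sX x \<inter> (sX a - sX b) = {}" for x
    using sX_subset_PX is_upsetX_sX unfolding downX_def is_upsetX_def by blast
  then show ?thesis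
    unfolding rel_ann_def ideal_of_def sX_subset_iff[of "inf a _", symmetric] sX_inf by blast
qed

lemma ideal_of_PX_diff_downX_clopen:
  fixes U :: "'a::{bounded_lattice,distrib_lattice} set set"
  assumes "clopenX U"
  shows "\<exists>K. finite K \<and> ideal_of (PX - downX U) = (\<Inter>(a, b)\<in>K. rel_ann a b)"
proof -
  obtain K where K: "finite K" "U = (\<Union>(a, b)\<in>K. sX a - sX b)"
    using clopen_eq_finite_Union_sX_diff[OF assms] by blast
  have "PX - downX U = PX \<inter> \<Inter>((\<lambda>(a, b). PX - downX (sX a - sX b)) ` K)"
    unfolding K(2) downX_def by blast
  then have "ideal_of (PX - downX U) = \<Inter>(ideal_of ` (\<lambda>(a, b). PX - downX (sX a - sX b)) ` K)"
    by (simp only: ideal_of_PX_Inter)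
  also have "ideal_of ` (\<lambda>(a, b). PX - downX (sX a - sX b)) ` K = (\<lambda>(a, b). rel_ann a b) ` K"
    by (auto simp: rel_ann_eq_ideal_of)
  finally have "ideal_of (PX - downX U) = (\<Inter>(a, b)\<in>K. rel_ann a b)" .
  with K(1) show ?thesis
    by blast
qed

lemma rel_ann_all_iff_clopen:
  fixes P :: "'a::{bounded_lattice,distrib_lattice} set \<Rightarrow> bool"
  assumes P_Inter: "\<And>\<I>. finite \<I> \<Longrightarrow> \<forall>I\<in>\<I>. P I \<Longrightarrow> P (\<Inter>\<I>)"
  shows "(\<forall>a b::'a. P (rel_ann a b)) \<longleftrightarrow> (\<forall>U. clopenX U \<longrightarrow> P (ideal_of (PX - downX U)))"
proof
  assume rel_ann: "\<forall>a b::'a. P (rel_ann a b)"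
  show "\<forall>U. clopenX U \<longrightarrow> P (ideal_of (PX - downX U))"
  proof (intro allI impI)
    fix U :: "'a set set"
    assume "clopenX U"
    then obtain K where "finite K" "ideal_of (PX - downX U) = (\<Inter>(a, b)\<in>K. rel_ann a b)"
      using ideal_of_PX_diff_downX_clopen by blast
    moreover have "\<forall>I\<in>(\<lambda>(a, b). rel_ann a b) ` K. P I"
      using rel_ann by auto
    ultimately show "P (ideal_of (PX - downX U))"
      using P_Inter[of "(\<lambda>(a, b). rel_ann a b) ` K"] by simp
  qed
next
  assume "\<forall>U. clopenX U \<longrightarrow> P (ideal_of (PX - downX U))"
  then show "\<forall>a b::'a. P (rel_ann a b)"
    unfolding rel_ann_eq_ideal_of using clopenX_sX_diff by blast
qed

lemma BLk_Inter:
  fixes \<I> :: "'a::bounded_lattice set set"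
  assumes "finite \<I>" "\<forall>I\<in>\<I>. I \<in> BLk \<kappa>"
  shows "\<Inter>\<I> \<in> BLk \<kappa>"
  using assms
proof induction
  case empty
  have "{..top::'a} = UNIV"
    by auto
  then show ?case
    using BLk.princ[of "top::'a" \<kappa>] by simp
next
  case (insert I \<I>)
  then show ?case
    by (simp add: BLk.meet)
qed

lemma normal_ideal_Inter:
  fixes \<N> :: "'a::order set set"
  assumes "\<forall>N\<in>\<N>. normal_ideal N"
  shows "normal_ideal (\<Inter>\<N>)"
proof -
  have "lower_bounds (upper_bounds (\<Inter>\<N>)) \<subseteq> N" if "N \<in> \<N>" for N
  proof -
    have "lower_bounds (upper_bounds (\<Inter>\<N>)) \<subseteq> lower_bounds (upper_bounds N)"
      using that unfolding lower_bounds_def upper_bounds_def by blast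
    then show ?thesis
      using assms that unfolding normal_ideal_def by blast
  qed
  moreover have "\<Inter>\<N> \<subseteq> lower_bounds (upper_bounds (\<Inter>\<N>))"
    unfolding lower_bounds_def upper_bounds_def by blast
  moreover have "is_downset (\<Inter>\<N>)"
    using assms unfolding normal_ideal_def is_downset_def by blast
  ultimately show ?thesis
    unfolding normal_ideal_def by blast
qed

lemma upper_bounds_ideal_of:
  fixes Q :: "'a::{bounded_lattice,distrib_lattice} set set"
  assumes "openin priestley_top Q" "is_upsetX Q"
  shows "upper_bounds (ideal_of Q) = {v. Q \<subseteq> sX v}"
proof -
  have "(\<forall>a\<in>ideal_of Q. a \<le> v) \<longleftrightarrow> \<Union>(sX ` ideal_of Q) \<subseteq> sX v" for v
    by (simp add: UN_subset_iff sX_subset_iff)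
  then show ?thesis
    unfolding upper_bounds_def Union_sX_ideal_of[OF assms] by simp
qed

lemma lower_bounds_upper_bounds_ideal_of:
  fixes Q :: "'a::{bounded_lattice,distrib_lattice} set set"
  assumes "openin priestley_top Q" "is_upsetX Q"
  shows "lower_bounds (upper_bounds (ideal_of Q)) = ideal_of (cl2X Q)"
proof -
  have "(\<forall>v. Q \<subseteq> sX v \<longrightarrow> l \<le> v) \<longleftrightarrow> sX l \<subseteq> cl2X Q" for l
    unfolding cl2X_eq_Inter_sX[OF openin_subset_PX[OF assms(1)]]
    using sX_subset_PX unfolding sX_subset_iff[of l, symmetric] by blast
  then show ?thesis
    unfolding upper_bounds_ideal_of[OF assms] by (simp add: lower_bounds_def ideal_of_def)
qed

lemma normal_ideal_ideal_of_iff: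
  fixes Q :: "'a::{bounded_lattice,distrib_lattice} set set"
  assumes "openin priestley_top Q" "is_upsetX Q"
  shows "normal_ideal (ideal_of Q) \<longleftrightarrow> Q \<in> DMX"
proof -
  have "normal_ideal (ideal_of Q) \<longleftrightarrow> ideal_of Q = ideal_of (int1X (cl2X Q))"
    unfolding normal_ideal_def lower_bounds_upper_bounds_ideal_of[OF assms] ideal_of_int1X
    using is_downset_ideal_of by blast
  also have "\<dots> \<longleftrightarrow> Q = int1X (cl2X Q)"
    by (rule ideal_of_inject[OF assms openin_int1X is_upsetX_int1X])
  finally show ?thesis
    unfolding DMX_def using assms by auto
qed

lemma complete_lat_iff_extremally_order_disconnected:
  "complete_lat TYPE('a::{bounded_lattice,distrib_lattice}) \<longleftrightarrow> extremally_order_disconnected TYPE('a)"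
proof
  assume complete: "complete_lat TYPE('a)"
  show "extremally_order_disconnected TYPE('a)"
    unfolding extremally_order_disconnected_def
  proof (intro allI impI)
    fix U :: "'a set set"
    assume U: "openin priestley_top U \<and> is_upsetX U"
    obtain j where "is_join (ideal_of U) j"
      using complete unfolding complete_lat_def by blast
    then have "cl2X U = sX j"
      unfolding is_join_iff_cl2X Union_sX_ideal_of[OF U[THEN conjunct1] U[THEN conjunct2]] ..
    then show "clopenX (cl2X U)"
      unfolding clopenX_def using openin_sX[of j] closedin_sX[of j] by simp
  qed
next
  assume eod: "extremally_order_disconnected TYPE('a)"
  show "complete_lat TYPE('a)"
    unfolding complete_lat_def
  proof
    fix S :: "'a set"
    have "openin priestley_top (\<Union>(sX ` S))"
      using openin_sX by blast
    moreover have "is_upsetX (\<Union>(sX ` S))"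
      using is_upsetX_sX unfolding is_upsetX_def by blast
    ultimately have "clopenX (cl2X (\<Union>(sX ` S)))"
      using eod unfolding extremally_order_disconnected_def by blast
    moreover have "is_upsetX (cl2X (\<Union>(sX ` S)))"
      unfolding cl2X_def upX_def is_upsetX_def by blast
    ultimately obtain j where "sX j = cl2X (\<Union>(sX ` S))"
      using clopen_upset_eq_sX unfolding clopenX_def by metis
    then show "\<exists>j. is_join S j"
      unfolding is_join_iff_cl2X by blast
  qed
qed

lemma kappa_frame_iff_clX_clopen:
  "kappa_frame \<kappa> TYPE('a::{bounded_lattice,distrib_lattice}) \<longleftrightarrow>
     (\<forall>U::'a set set. kappa_clopen_upsetX \<kappa> U \<longrightarrow> clopen_upsetX (clX U))"
proof -
  have "(\<exists>j. sX j = clX U) \<longleftrightarrow> clopen_upsetX (clX U)" for U :: "'a set set"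
    unfolding clopen_upsetX_def clopenX_def
    using clopen_upset_eq_sX openin_sX closedin_sX is_upsetX_sX by metis
  then show ?thesis
    unfolding kappa_frame_def kappa_clopen_upsetX_iff distributive_join_iff_clX by blast
qed

lemma heyting_is_join_distributive:
  assumes heyting: "heyting TYPE('a::lattice)" and join: "is_join S (j::'a)"
  shows "distributive_join S j"
  unfolding distributive_join_def
proof (intro conjI allI)
  fix a
  show "is_join (inf a ` S) (inf a j)"
    unfolding is_join_def
  proof (intro conjI ballI allI impI)
    fix s assume "s \<in> inf a ` S"
    then show "s \<le> inf a j"
      using join unfolding is_join_def by (auto intro: le_infI2)
  next
    fix u assume bound: "\<forall>s\<in>inf a ` S. s \<le> u"
    obtain i where i: "\<forall>x. inf x a \<le> u \<longleftrightarrow> x \<le> i"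
      using heyting unfolding heyting_def by blast
    then have "\<forall>s\<in>S. s \<le> i"
      using bound by (simp add: inf_commute)
    then have "j \<le> i"
      using join unfolding is_join_def by blast
    then show "inf a j \<le> u"
      using i by (metis inf_commute)
  qed
qed (fact join)

lemma heyting_iff_rel_ann_principal:
  "heyting TYPE('a::lattice) \<longleftrightarrow> (\<forall>b c::'a. \<exists>i. rel_ann b c = {..i})"
  unfolding heyting_def rel_ann_def by (simp add: set_eq_iff inf_commute)

lemma rel_ann_principal_iff_downX_clopen:
  fixes b c :: "'a::{bounded_lattice,distrib_lattice}"
  shows "(\<exists>i. rel_ann b c = {..i}) \<longleftrightarrow> clopenX (downX (sX b - sX c))"
proof -
  let ?W = "PX - downX (sX b - sX c)"
  have W: "openin priestley_top ?W" "is_upsetX ?W"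
    by (intro openin_PX_diff_downX closedin_sX_diff is_upsetX_PX_diff_downX)+
  have down: "closedin priestley_top (downX (sX b - sX c))" "downX (sX b - sX c) \<subseteq> PX"
    using closedin_downX[OF closedin_sX_diff] closedin_subset_PX by blast+
  have "(\<exists>i. rel_ann b c = {..i}) \<longleftrightarrow> (\<exists>i. ?W = sX i)"
    unfolding rel_ann_eq_ideal_of ideal_of_sX[symmetric]
    using ideal_of_inject[OF W openin_sX is_upsetX_sX] by simp
  also have "\<dots> \<longleftrightarrow> closedin priestley_top ?W"
    using clopen_upset_eq_sX[OF W(1) _ W(2)] closedin_sX by metis
  also have "\<dots> \<longleftrightarrow> clopenX (downX (sX b - sX c))"
    unfolding clopenX_def using down closedin_PX_diff openin_PX_diff by (metis double_diff order_refl)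
  finally show ?thesis .
qed

lemma esakia_iff_downX_sX_diff_clopen:
  "esakia TYPE('a::{bounded_lattice,distrib_lattice}) \<longleftrightarrow> (\<forall>b c::'a. clopenX (downX (sX b - sX c)))"
proof
  assume "esakia TYPE('a)"
  then show "\<forall>b c::'a. clopenX (downX (sX b - sX c))"
    unfolding esakia_def using clopenX_sX_diff by blast
next
  assume basic: "\<forall>b c::'a. clopenX (downX (sX b - sX c))"
  show "esakia TYPE('a)"
    unfolding esakia_def
  proof (intro allI impI)
    fix U :: "'a set set"
    assume "clopenX U"
    then obtain K where K: "finite K" "U = (\<Union>(a, b)\<in>K. sX a - sX b)"
      using clopen_eq_finite_Union_sX_diff by blast
    then have "downX U = (\<Union>(a, b)\<in>K. downX (sX a - sX b))"
      unfolding downX_def by blast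
    with K(1) basic show "clopenX (downX U)"
      unfolding clopenX_def by (auto intro!: openin_Union closedin_Union)
  qed
qed

lemma heyting_iff_esakia:
  "heyting TYPE('a::{bounded_lattice,distrib_lattice}) \<longleftrightarrow> esakia TYPE('a)"
  unfolding heyting_iff_rel_ann_principal rel_ann_principal_iff_downX_clopen
    esakia_iff_downX_sX_diff_clopen ..

lemma kappa_complete_heyting_iff_kappa_frame_heyting:
  "kappa_complete \<kappa> TYPE('a::lattice) \<and> heyting TYPE('a) \<longleftrightarrow> kappa_frame \<kappa> TYPE('a) \<and> heyting TYPE('a)"
  unfolding kappa_complete_def kappa_frame_def
  using heyting_is_join_distributive distributive_join_def by metis

lemma ideal_of_PX_diff_downX_in_BLk_iff:
  fixes \<kappa> :: "'k rel" and U :: "'a::{bounded_lattice,distrib_lattice} set set"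
  assumes "Cinfinite \<kappa>" "regularCard \<kappa>" "clopenX U"
  shows "ideal_of (PX - downX U) \<in> BLk \<kappa> \<longleftrightarrow> PX - downX U \<in> BLkX \<kappa>"
  using assms(3) unfolding clopenX_def
  by (intro ideal_of_in_BLk_iff[OF assms(1,2)] openin_PX_diff_downX is_upsetX_PX_diff_downX) simp

lemma rel_ann_BLk_iff:
  fixes \<kappa> :: "'k rel"
  assumes "Cinfinite \<kappa>" "regularCard \<kappa>"
  shows "(\<forall>a b::'a::{bounded_lattice,distrib_lattice}. rel_ann a b \<in> BLk \<kappa>) \<longleftrightarrow>
    (\<forall>U::'a set set. clopenX U \<longrightarrow> PX - downX U \<in> BLkX \<kappa>)"
proof -
  have "\<And>\<I> :: 'a set set. finite \<I> \<Longrightarrow> \<forall>I\<in>\<I>. I \<in> BLk \<kappa> \<Longrightarrow> \<Inter>\<I> \<in> BLk \<kappa>"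
    by (rule BLk_Inter)
  note rel_ann_all_iff_clopen[of "\<lambda>I. I \<in> BLk \<kappa>", OF this]
  also have "(\<forall>U::'a set set. clopenX U \<longrightarrow> ideal_of (PX - downX U) \<in> BLk \<kappa>) \<longleftrightarrow>
      (\<forall>U::'a set set. clopenX U \<longrightarrow> PX - downX U \<in> BLkX \<kappa>)"
    by (rule all_cong) (rule ideal_of_PX_diff_downX_in_BLk_iff[OF assms])
  finally show ?thesis .
qed

lemma rel_ann_normal_BLk_iff:
  fixes \<kappa> :: "'k rel"
  assumes "Cinfinite \<kappa>" "regularCard \<kappa>"
  shows "(\<forall>a b::'a::{bounded_lattice,distrib_lattice}. normal_ideal (rel_ann a b) \<and> rel_ann a b \<in> BLk \<kappa>)
    \<longleftrightarrow> (\<forall>U::'a set set. clopenX U \<longrightarrow> PX - downX U \<in> DMX \<inter> BLkX \<kappa>)"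
proof -
  have "\<And>\<I> :: 'a set set. finite \<I> \<Longrightarrow> \<forall>I\<in>\<I>. normal_ideal I \<and> I \<in> BLk \<kappa> \<Longrightarrow>
      normal_ideal (\<Inter>\<I>) \<and> \<Inter>\<I> \<in> BLk \<kappa>"
    by (simp add: normal_ideal_Inter BLk_Inter)
  note rel_ann_all_iff_clopen[of "\<lambda>I. normal_ideal I \<and> I \<in> BLk \<kappa>", OF this]
  also have "(\<forall>U::'a set set. clopenX U \<longrightarrow>
        normal_ideal (ideal_of (PX - downX U)) \<and> ideal_of (PX - downX U) \<in> BLk \<kappa>)
      \<longleftrightarrow> (\<forall>U::'a set set. clopenX U \<longrightarrow> PX - downX U \<in> DMX \<inter> BLkX \<kappa>)"
  proof (rule all_cong)
    fix U :: "'a set set"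
    assume U: "clopenX U"
    then have "openin priestley_top (PX - downX U)"
      unfolding clopenX_def by (intro openin_PX_diff_downX) simp
    then show "normal_ideal (ideal_of (PX - downX U)) \<and> ideal_of (PX - downX U) \<in> BLk \<kappa> \<longleftrightarrow>
        PX - downX U \<in> DMX \<inter> BLkX \<kappa>"
      using normal_ideal_ideal_of_iff[OF _ is_upsetX_PX_diff_downX]
        ideal_of_PX_diff_downX_in_BLk_iff[OF assms U] by blast
  qed
  finally show ?thesis .
qed

theorem theorem5p21:
  fixes \<kappa> :: "'k rel"
  assumes "Cinfinite \<kappa>" and "regularCard \<kappa>"
  shows
   "((complete_lat TYPE('a::{bounded_lattice,distrib_lattice}) \<and> kappa_frame \<kappa> TYPE('a))
      \<longleftrightarrow> (extremally_order_disconnected TYPE('a) \<and>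
           (\<forall>U::'a set set. kappa_clopen_upsetX \<kappa> U \<longrightarrow> clopen_upsetX (clX U))))
  \<and> ((kappa_complete \<kappa> TYPE('a) \<and> heyting TYPE('a))
      \<longleftrightarrow> (esakia TYPE('a) \<and>
           (\<forall>U::'a set set. kappa_clopen_upsetX \<kappa> U \<longrightarrow> clopen_upsetX (clX U))))
  \<and> ((\<forall>a b::'a. rel_ann a b \<in> BLk \<kappa>)
      \<longleftrightarrow> (\<forall>U::'a set set. clopenX U \<longrightarrow> PX - downX U \<in> BLkX \<kappa>))
  \<and> ((\<forall>a b::'a. normal_ideal (rel_ann a b) \<and> rel_ann a b \<in> BLk \<kappa>)
      \<longleftrightarrow> (\<forall>U::'a set set. clopenX U \<longrightarrow> PX - downX U \<in> DMX \<inter> BLkX \<kappa>))"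
proof -
  let ?closure_clopen = "\<forall>U::'a set set. kappa_clopen_upsetX \<kappa> U \<longrightarrow> clopen_upsetX (clX U)"
  have "complete_lat TYPE('a) \<and> kappa_frame \<kappa> TYPE('a) \<longleftrightarrow>
      extremally_order_disconnected TYPE('a) \<and> ?closure_clopen"
    by (simp only: complete_lat_iff_extremally_order_disconnected kappa_frame_iff_clX_clopen)
  moreover have "kappa_complete \<kappa> TYPE('a) \<and> heyting TYPE('a) \<longleftrightarrow> esakia TYPE('a) \<and> ?closure_clopen"
    using kappa_complete_heyting_iff_kappa_frame_heyting[of \<kappa>, where 'a='a]
    unfolding kappa_frame_iff_clX_clopen heyting_iff_esakia by blast
  ultimately show ?thesis
    using rel_ann_BLk_iff[OF assms] rel_ann_normal_BLk_iff[OF assms] by blast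
qed

end
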